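(* Let $\mathcal{S}=\langle\mathcal{L},\vdash\rangle$ be a logic whose signature contains a unary operator $\neg$, and let $\varrho\subseteq\mathcal{P}(\mathcal{L})\times\mathcal{L}$ have finite reach. Then there exist $\alpha,\beta\in\mathcal{L}$ with $\{\alpha,\neg\alpha\}\not\vdash^\varrho\beta$, and there exist $\alpha,\beta\in\mathcal{L}$ with $\{\alpha,\neg\alpha\}\not\vdash^{p\varrho}\beta$; i.e., both companions are paraconsistent with respect to $\neg$.
   Context: A logic is a pair $\langle\mathcal{L},\vdash\rangle$ where $\mathcal{L}$ is the formula algebra over a nonempty set of variables $V$ of some finite signature and $\vdash\subseteq\mathcal{P}(\mathcal{L})\times\mathcal{L}$ is arbitrary. For $\varrho\subseteq\mathcal{P}(\mathcal{L})\times\mathcal{L}$: $\Gamma\vdash^\varrho\alpha$ iff there is $\Delta\subseteq\Gamma$ with $(\Delta,\alpha)\in\varrho$ and $\Delta\vdash\alpha$; $\Gamma\vdash^{p\varrho}\alpha$ iff there is a nonempty $\Delta\subseteq\Gamma$ with $(\Delta,\alpha)\in\varrho$ and $\Delta\vdash\alpha$. A relation $\varrho\subseteq\mathcal{P}(\mathcal{L})\times\mathcal{L}$ has finite reach if for every $\Delta\subseteq\mathcal{L}$ the set $\{\alpha\mid(\Delta,\alpha)\in\varrho\}$ is finite. *)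

theory Defs
  imports Main
begin

text \<open>Formulas over variables of type 'v and connectives of type 'c
  (a finite signature is modelled by a finite type 'c together with an arity map).\<close>
datatype ('v, 'c) form = Var 'v | Op 'c "('v, 'c) form list"

fun wf_form :: "('c \<Rightarrow> nat) \<Rightarrow> ('v, 'c) form \<Rightarrow> bool" where
  "wf_form ar (Var v) = True"
| "wf_form ar (Op c as) = (length as = ar c \<and> (\<forall>a\<in>set as. wf_form ar a))"

definition formulas :: "('c \<Rightarrow> nat) \<Rightarrow> ('v, 'c) form set" where
  "formulas ar = {\<phi>. wf_form ar \<phi>}"

definition derives_rho ::
  "('f set \<Rightarrow> 'f \<Rightarrow> bool) \<Rightarrow> ('f set \<times> 'f) set \<Rightarrow> 'f set \<Rightarrow> 'f \<Rightarrow> bool" where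
  "derives_rho der \<rho> \<Gamma> \<alpha> = (\<exists>\<Delta>. \<Delta> \<subseteq> \<Gamma> \<and> (\<Delta>, \<alpha>) \<in> \<rho> \<and> der \<Delta> \<alpha>)"

definition derives_prho ::
  "('f set \<Rightarrow> 'f \<Rightarrow> bool) \<Rightarrow> ('f set \<times> 'f) set \<Rightarrow> 'f set \<Rightarrow> 'f \<Rightarrow> bool" where
  "derives_prho der \<rho> \<Gamma> \<alpha> = (\<exists>\<Delta>. \<Delta> \<noteq> {} \<and> \<Delta> \<subseteq> \<Gamma> \<and> (\<Delta>, \<alpha>) \<in> \<rho> \<and> der \<Delta> \<alpha>)"

definition finite_reach :: "('f set \<times> 'f) set \<Rightarrow> bool" where
  "finite_reach \<rho> = (\<forall>\<Delta>. finite {\<alpha>. (\<Delta>, \<alpha>) \<in> \<rho>})"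

end

theory Submission
  imports Defs
begin

text \<open>Under a relation of finite reach a finite set of premises has only finitely many
  \<open>\<rho>\<close>-conclusions, since it has only finitely many subsets. A unary connective \<open>c\<close>
  makes the formula algebra infinite, the formulas \<open>c\<^sup>n x\<close> being pairwise distinct.
  Hence for every \<open>\<alpha>\<close> some formula is not a \<open>\<rho>\<close>-consequence of \<open>{\<alpha>, \<not>\<alpha>}\<close>, and
  neither is it a \<open>p\<rho>\<close>-consequence, as \<open>\<turnstile>\<^sup>p\<^sup>\<rho>\<close> is contained in \<open>\<turnstile>\<^sup>\<rho>\<close>.\<close>

primrec iterate_op :: "'c \<Rightarrow> nat \<Rightarrow> 'v \<Rightarrow> ('v, 'c) form" where
  "iterate_op c 0 x = Var x"
| "iterate_op c (Suc n) x = Op c [iterate_op c n x]"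

lemma inj_iterate_op: "inj (\<lambda>n. iterate_op c n x)"
proof (rule injI)
  show "iterate_op c m x = iterate_op c n x \<Longrightarrow> m = n" for m n
    by (induction m arbitrary: n) (case_tac n; simp)+
qed

lemma iterate_op_in_formulas: "ar c = 1 \<Longrightarrow> iterate_op c n x \<in> formulas ar"
  by (induction n) (auto simp: formulas_def)

lemma infinite_formulas:
  assumes "ar c = 1"
  shows "infinite (formulas ar :: ('v, 'c) form set)"
proof
  fix x :: 'v
  assume "finite (formulas ar :: ('v, 'c) form set)"
  moreover have "range (\<lambda>n. iterate_op c n x) \<subseteq> formulas ar"
    using iterate_op_in_formulas[of ar c, OF assms] by (rule image_subsetI)
  ultimately have "finite (range (\<lambda>n. iterate_op c n x))"
    by (rule finite_subset[rotated])
  then show False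
    using finite_imageD[OF _ inj_iterate_op] infinite_UNIV_nat by simp
qed

lemma derives_prho_imp_derives_rho:
  "derives_prho der \<rho> \<Gamma> \<alpha> \<Longrightarrow> derives_rho der \<rho> \<Gamma> \<alpha>"
  unfolding derives_prho_def derives_rho_def by blast

lemma finite_derives_rho:
  assumes "finite_reach \<rho>" and "finite \<Gamma>"
  shows "finite {\<beta>. derives_rho der \<rho> \<Gamma> \<beta>}"
proof (rule finite_subset)
  show "{\<beta>. derives_rho der \<rho> \<Gamma> \<beta>} \<subseteq> (\<Union>\<Delta>\<in>Pow \<Gamma>. {\<beta>. (\<Delta>, \<beta>) \<in> \<rho>})"
    unfolding derives_rho_def by blast
  show "finite (\<Union>\<Delta>\<in>Pow \<Gamma>. {\<beta>. (\<Delta>, \<beta>) \<in> \<rho>})"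
    using assms unfolding finite_reach_def by blast
qed

lemma ex_not_derives_rho:
  assumes "finite_reach \<rho>" and "finite \<Gamma>" and "infinite F"
  shows "\<exists>\<beta>\<in>F. \<not> derives_rho der \<rho> \<Gamma> \<beta>"
proof (rule ccontr)
  assume "\<not> ?thesis"
  then have "F \<subseteq> {\<beta>. derives_rho der \<rho> \<Gamma> \<beta>}" by blast
  then show False
    using finite_derives_rho[OF assms(1,2)] assms(3) finite_subset by blast
qed

theorem corollary3p16:
  fixes ar :: "'c::finite \<Rightarrow> nat"
    and neg :: 'c
    and der :: "('v, 'c) form set \<Rightarrow> ('v, 'c) form \<Rightarrow> bool"
    and \<rho> :: "(('v, 'c) form set \<times> ('v, 'c) form) set"
  assumes neg_unary: "ar neg = 1"
    and der_dom: "\<forall>\<Gamma> \<alpha>. der \<Gamma> \<alpha> \<longrightarrow> \<Gamma> \<subseteq> formulas ar \<and> \<alpha> \<in> formulas ar"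
    and rho_dom: "\<rho> \<subseteq> Pow (formulas ar) \<times> formulas ar"
    and reach: "finite_reach \<rho>"
  shows "(\<exists>\<alpha>\<in>formulas ar. \<exists>\<beta>\<in>formulas ar.
            \<not> derives_rho der \<rho> {\<alpha>, Op neg [\<alpha>]} \<beta>)
       \<and> (\<exists>\<alpha>\<in>formulas ar. \<exists>\<beta>\<in>formulas ar.
            \<not> derives_prho der \<rho> {\<alpha>, Op neg [\<alpha>]} \<beta>)"
proof -
  fix x :: 'v
  define \<alpha> :: "('v, 'c) form" where "\<alpha> = Var x"
  have \<alpha>: "\<alpha> \<in> formulas ar"
    by (simp add: \<alpha>_def formulas_def)
  have finite_premises: "finite {\<alpha>, Op neg [\<alpha>]}"
    by simp
  obtain \<beta> where \<beta>: "\<beta> \<in> formulas ar" and not_rho: "\<not> derives_rho der \<rho> {\<alpha>, Op neg [\<alpha>]} \<beta>"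
    using ex_not_derives_rho[OF reach finite_premises infinite_formulas[of ar neg, OF neg_unary]]
    by blast
  then have "\<not> derives_prho der \<rho> {\<alpha>, Op neg [\<alpha>]} \<beta>"
    using derives_prho_imp_derives_rho by metis
  with \<alpha> \<beta> not_rho show ?thesis by blast
qed

end
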